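(* Let $\mathbb{X}$ be an infinite-dimensional (real or complex) Banach space and let $\mathcal{B}=(\mathbf{e}_n)_{n=1}^\infty$ be a semi-normalized quasi-greedy basis of $\mathbb{X}$. Then $C_w=1$ (i.e. $\|\mathcal{G}_N(x)\|\le\|x\|$ for every $x\in\mathbb{X}$, every $N\in\mathbb{N}$ and every choice of greedy set $\Lambda_N(x)$) if and only if $\mathcal{B}$ is unconditional with suppression unconditional constant $K_{su}=1$ (i.e. $\|P_A(x)\|\le\|x\|$ for every $x\in\mathbb{X}$ and every $A\subseteq\mathbb{N}$).
   Context: A basis $(\mathbf{e}_n)_{n=1}^\infty$ of a Banach space $\mathbb{X}$ is a Schauder basis; it is semi-normalized if $0<\inf_n\|\mathbf{e}_n\|\le\sup_n\|\mathbf{e}_n\|<\infty$. Let $(\mathbf{e}_n^* )_{n=1}^\infty$ be the biorthogonal (coordinate) functionals, so $x=\sum_n \mathbf{e}_n^*(x)\mathbf{e}_n$. For $x\in\mathbb{X}$ and $N\in\mathbb{N}$, a greedy set $\Lambda_N(x)$ is any set of $N$ indices with $\min\{|\mathbf{e}_j^*(x)|: j\in\Lambda_N(x)\}\ge\max\{|\mathbf{e}_j^*(x)|: j\notin\Lambda_N(x)\}$, and the greedy operator is $\mathcal{G}_N(x)=\sum_{j\in\Lambda_N(x)}\mathbf{e}_j^*(x)\mathbf{e}_j$. The basis is quasi-greedy if there is a constant $C$ with $\|\mathcal{G}_N(x)\|\le C\|x\|$ for all $x$, $N$ and all choices of greedy sets; $C_w$ denotes the smallest such $C$, and $C_t$ denotes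 the smallest constant $\tilde C$ with $\|x-\mathcal{G}_N(x)\|\le\tilde C\|x\|$ for all $x$, $N$ and choices of greedy sets. For $A\subseteq\mathbb{N}$, $P_A(x)=\sum_{n\in A}\mathbf{e}_n^*(x)\mathbf{e}_n$. The basis is unconditional if every expansion $\sum_n\mathbf{e}_n^*(x)\mathbf{e}_n$ converges to $x$ in any order; equivalently the $P_A$ are uniformly bounded, and the suppression unconditional constant $K_{su}$ is the smallest $K$ with $\|P_A(x)\|\le K\|x\|$ for all $x\in\mathbb{X}$, $A\subseteq\mathbb{N}$. *)

theory Defs
  imports "HOL-Analysis.Analysis"
begin

text \<open>Scalars: a field 'k (real or complex), acting on a Banach space 'a via sc.
  Basis vectors indexed by nat (starting at 0 instead of 1).\<close>

text \<open>Complex Banach space structure on a (real) Banach type: a complex scalar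
  multiplication compatible with the real one and with the norm.\<close>
definition complex_banach_scale :: "(complex \<Rightarrow> 'a::banach \<Rightarrow> 'a) \<Rightarrow> bool" where
  "complex_banach_scale sc \<longleftrightarrow> vector_space sc
     \<and> (\<forall>c x. norm (sc c x) = norm c * norm x)
     \<and> (\<forall>r x. sc (complex_of_real r) x = scaleR r x)"

definition schauder_basis :: "('k::real_normed_field \<Rightarrow> 'a::banach \<Rightarrow> 'a) \<Rightarrow> (nat \<Rightarrow> 'a) \<Rightarrow> bool" where
  "schauder_basis sc e \<longleftrightarrow>
     (\<forall>x. \<exists>!a. (\<lambda>N. \<Sum>n<N. sc (a n) (e n)) \<longlonglongrightarrow> x)"

definition coord :: "('k::real_normed_field \<Rightarrow> 'a::banach \<Rightarrow> 'a) \<Rightarrow> (nat \<Rightarrow> 'a) \<Rightarrow> nat \<Rightarrow> 'a \<Rightarrow> 'k" where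
  "coord sc e n x = (THE a. (\<lambda>N. \<Sum>m<N. sc (a m) (e m)) \<longlonglongrightarrow> x) n"

definition semi_normalized :: "(nat \<Rightarrow> 'a::real_normed_vector) \<Rightarrow> bool" where
  "semi_normalized e \<longleftrightarrow> (\<exists>c>0. \<forall>n. c \<le> norm (e n)) \<and> (\<exists>C. \<forall>n. norm (e n) \<le> C)"

definition greedy_set :: "('k::real_normed_field \<Rightarrow> 'a::banach \<Rightarrow> 'a) \<Rightarrow> (nat \<Rightarrow> 'a) \<Rightarrow> 'a \<Rightarrow> nat \<Rightarrow> nat set \<Rightarrow> bool" where
  "greedy_set sc e x N A \<longleftrightarrow> finite A \<and> card A = N \<and>
     (\<forall>j\<in>A. \<forall>k. k \<notin> A \<longrightarrow> norm (coord sc e k x) \<le> norm (coord sc e j x))"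

definition greedy_op :: "('k::real_normed_field \<Rightarrow> 'a::banach \<Rightarrow> 'a) \<Rightarrow> (nat \<Rightarrow> 'a) \<Rightarrow> nat set \<Rightarrow> 'a \<Rightarrow> 'a" where
  "greedy_op sc e A x = (\<Sum>j\<in>A. sc (coord sc e j x) (e j))"

definition quasi_greedy :: "('k::real_normed_field \<Rightarrow> 'a::banach \<Rightarrow> 'a) \<Rightarrow> (nat \<Rightarrow> 'a) \<Rightarrow> bool" where
  "quasi_greedy sc e \<longleftrightarrow> (\<exists>C. \<forall>x N A. greedy_set sc e x N A \<longrightarrow> norm (greedy_op sc e A x) \<le> C * norm x)"

definition unconditional_basis :: "('k::real_normed_field \<Rightarrow> 'a::banach \<Rightarrow> 'a) \<Rightarrow> (nat \<Rightarrow> 'a) \<Rightarrow> bool" where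
  "unconditional_basis sc e \<longleftrightarrow> (\<forall>x \<pi>. bij \<pi> \<longrightarrow>
     (\<lambda>N. \<Sum>n<N. sc (coord sc e (\<pi> n) x) (e (\<pi> n))) \<longlonglongrightarrow> x)"

definition coord_proj :: "('k::real_normed_field \<Rightarrow> 'a::banach \<Rightarrow> 'a) \<Rightarrow> (nat \<Rightarrow> 'a) \<Rightarrow> nat set \<Rightarrow> 'a \<Rightarrow> 'a" where
  "coord_proj sc e A x = lim (\<lambda>N. \<Sum>n\<in>A \<inter> {..<N}. sc (coord sc e n x) (e n))"

definition infinite_dimensional :: "('k::real_normed_field \<Rightarrow> 'a::banach \<Rightarrow> 'a) \<Rightarrow> bool" where
  "infinite_dimensional sc \<longleftrightarrow> \<not> (\<exists>B. finite B \<and> module.span sc B = UNIV)"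

definition Cw_one :: "('k::real_normed_field \<Rightarrow> 'a::banach \<Rightarrow> 'a) \<Rightarrow> (nat \<Rightarrow> 'a) \<Rightarrow> bool" where
  "Cw_one sc e \<longleftrightarrow> (\<forall>x N A. greedy_set sc e x N A \<longrightarrow> norm (greedy_op sc e A x) \<le> norm x)"

definition Ksu_one :: "('k::real_normed_field \<Rightarrow> 'a::banach \<Rightarrow> 'a) \<Rightarrow> (nat \<Rightarrow> 'a) \<Rightarrow> bool" where
  "Ksu_one sc e \<longleftrightarrow> unconditional_basis sc e \<and> (\<forall>x A. norm (coord_proj sc e A x) \<le> norm x)"

end

theory Submission
  imports Defs
begin

text \<open>Suppose \<open>C_w = 1\<close> and \<open>x = \<Sum>j\<in>F. a_j e_j\<close>. For \<open>k \<notin> F\<close> and \<open>|t|\<close> below every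
  nonzero \<open>|a_j|\<close>, the support of \<open>x\<close> is a greedy set of \<open>x + t e_k\<close>, so
  \<open>\<parallel>x\<parallel> \<le> \<parallel>x + t e_k\<parallel>\<close>; convexity of the norm removes the smallness condition on \<open>t\<close>.
  Hence the norm of a finite subsum of any expansion grows with the index set. For a convergent
  series this monotonicity forces unconditional summability, and passing to the limit bounds every
  coordinate projection by 1. Conversely, greedy sums are finite coordinate projections.\<close>

lemma has_sum_if_norm_mono_subsums:
  fixes g :: "nat \<Rightarrow> 'a::real_normed_vector"
  assumes mono: "\<And>F G. finite G \<Longrightarrow> F \<subseteq> G \<Longrightarrow> norm (sum g F) \<le> norm (sum g G)"
    and sums: "g sums x"
  shows "(g has_sum x) UNIV"
  unfolding has_sum_def tendsto_iff
proof (intro allI impI)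
  fix \<epsilon> :: real assume "\<epsilon> > 0"
  define S where "S = (\<lambda>n. \<Sum>i<n. g i)"
  obtain N where N: "\<And>n. n \<ge> N \<Longrightarrow> norm (S n - x) < \<epsilon> / 3"
    using sums \<open>\<epsilon> > 0\<close> unfolding sums_def S_def LIMSEQ_iff by (meson divide_pos_pos zero_less_numeral)
  have "dist (sum g Y) x < \<epsilon>" if Y: "finite Y" "{..<N} \<subseteq> Y" for Y
  proof -
    obtain M where M: "Y \<subseteq> {..<M}" using Y finite_nat_bounded by blast
    have "N \<le> M" using Y M by (meson lessThan_subset_iff order_trans)
    have "norm (sum g (Y - {..<N})) \<le> norm (sum g ({..<M} - {..<N}))"
      using M by (intro mono) auto
    also have "sum g ({..<M} - {..<N}) = S M - S N"
      unfolding S_def using \<open>N \<le> M\<close> by (simp add: sum_diff_nat_ivl atLeast0LessThan[symmetric])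
    also have "norm (S M - S N) < 2 * \<epsilon> / 3"
      using norm_diff_triangle_less[of "S M" x "\<epsilon> / 3" "S N" "\<epsilon> / 3"] N[of M] N[of N] \<open>N \<le> M\<close>
      by (simp add: norm_minus_commute)
    finally have "norm (sum g (Y - {..<N}) + (S N - x)) < \<epsilon>"
      using N[of N] by (intro norm_triangle_lt) simp
    moreover have "sum g Y = sum g (Y - {..<N}) + S N"
      unfolding S_def using Y by (simp add: sum.subset_diff[of "{..<N}" Y])
    ultimately show ?thesis by (simp add: dist_norm algebra_simps)
  qed
  then show "\<forall>\<^sub>F Y in finite_subsets_at_top UNIV. dist (sum g Y) x < \<epsilon>"
    unfolding eventually_finite_subsets_at_top by blast
qed

lemma sums_reindex_if_norm_mono_subsums:
  fixes g :: "nat \<Rightarrow> 'a::real_normed_vector"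
  assumes "\<And>F G. finite G \<Longrightarrow> F \<subseteq> G \<Longrightarrow> norm (sum g F) \<le> norm (sum g G)"
    and "g sums x" and "bij \<pi>"
  shows "(\<lambda>n. g (\<pi> n)) sums x"
  using has_sum_if_norm_mono_subsums[OF assms(1,2)] has_sum_reindex_bij_betw[OF \<open>bij \<pi>\<close>]
  by (auto intro: has_sum_imp_sums)

lemma subseries_norm_le_if_norm_mono_subsums:
  fixes g :: "nat \<Rightarrow> 'a::banach"
  assumes mono: "\<And>F G. finite G \<Longrightarrow> F \<subseteq> G \<Longrightarrow> norm (sum g F) \<le> norm (sum g G)"
    and sums: "g sums x"
  shows "norm (lim (\<lambda>N. \<Sum>n\<in>A \<inter> {..<N}. g n)) \<le> norm x"
proof -
  have "g summable_on A"
    using has_sum_if_norm_mono_subsums[OF mono sums] summable_on_subset_banach[of g UNIV A]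
    by (auto simp: summable_on_def)
  then obtain y where "(g has_sum y) A" by (auto simp: summable_on_def)
  then have "((\<lambda>n. if n \<in> A then g n else 0) has_sum y) UNIV"
    by (subst has_sum_cong_neutral) auto
  then have subseries: "(\<lambda>N. \<Sum>n\<in>A \<inter> {..<N}. g n) \<longlonglongrightarrow> y"
    by (auto dest!: has_sum_imp_sums simp: sums_def sum.inter_restrict[symmetric] Int_commute)
  have "norm y \<le> norm x"
  proof (rule LIMSEQ_le[OF tendsto_norm[OF subseries] tendsto_norm[OF sums[unfolded sums_def]]])
    show "\<exists>N. \<forall>n\<ge>N. norm (\<Sum>i\<in>A \<inter> {..<n}. g i) \<le> norm (\<Sum>i<n. g i)"
      by (auto intro: mono)
  qed
  then show ?thesis using limI[OF subseries] by simp
qed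

lemma schauder_basis_sums:
  assumes "schauder_basis sc e"
  shows "(\<lambda>n. sc (coord sc e n x) (e n)) sums x"
proof -
  have "\<exists>!a. (\<lambda>N. \<Sum>n<N. sc (a n) (e n)) \<longlonglongrightarrow> x"
    using assms unfolding schauder_basis_def by blast
  then show ?thesis unfolding sums_def coord_def by (rule theI')
qed

lemma coord_finite_sum:
  fixes sc :: "'k::real_normed_field \<Rightarrow> 'a::banach \<Rightarrow> 'a"
  assumes "vector_space sc" and "schauder_basis sc e" and "finite F"
  shows "coord sc e n (\<Sum>j\<in>F. sc (a j) (e j)) = (if n \<in> F then a n else 0)"
proof -
  interpret vector_space sc by fact
  define b where "b = (\<lambda>j. if j \<in> F then a j else 0)"
  define y where "y = (\<Sum>j\<in>F. sc (a j) (e j))"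
  obtain M where M: "F \<subseteq> {..<M}" using \<open>finite F\<close> finite_nat_bounded by blast
  have "(\<Sum>m<N. sc (b m) (e m)) = y" if "M \<le> N" for N
  proof -
    have "(\<Sum>m<N. sc (b m) (e m)) = (\<Sum>m\<in>{..<N} \<inter> F. sc (a m) (e m))"
      unfolding b_def sum.inter_restrict[OF finite_lessThan] by (intro sum.cong) auto
    also have "{..<N} \<inter> F = F" using M that by auto
    finally show ?thesis by (simp add: y_def)
  qed
  then have "(\<lambda>N. \<Sum>m<N. sc (b m) (e m)) \<longlonglongrightarrow> y"
    by (intro tendsto_eventually) (auto simp: eventually_at_top_linorder)
  moreover have "\<exists>!a. (\<lambda>N. \<Sum>n<N. sc (a n) (e n)) \<longlonglongrightarrow> y"
    using assms unfolding schauder_basis_def by blast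
  ultimately have "(THE a. (\<lambda>N. \<Sum>m<N. sc (a m) (e m)) \<longlonglongrightarrow> y) = b"
    by (rule the1_equality[rotated])
  then show ?thesis unfolding coord_def y_def[symmetric] by (simp add: b_def)
qed

lemma coord_proj_finite:
  assumes "finite A"
  shows "coord_proj sc e A x = greedy_op sc e A x"
proof -
  obtain M where M: "A \<subseteq> {..<M}" using assms finite_nat_bounded by blast
  have "A \<inter> {..<N} = A" if "M \<le> N" for N using M that by auto
  then have "(\<lambda>N. \<Sum>n\<in>A \<inter> {..<N}. sc (coord sc e n x) (e n)) \<longlonglongrightarrow> greedy_op sc e A x"
    unfolding greedy_op_def by (intro tendsto_eventually eventually_sequentiallyI[of M]) simp
  then show ?thesis unfolding coord_proj_def by (rule limI)
qed

lemma Cw_one_norm_le_add_small_multiple: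
  fixes sc :: "'k::real_normed_field \<Rightarrow> 'a::banach \<Rightarrow> 'a"
  assumes vs: "vector_space sc" and sb: "schauder_basis sc e" and cw: "Cw_one sc e"
    and F: "finite F" "k \<notin> F"
    and small: "\<And>j. j \<in> F \<Longrightarrow> a j \<noteq> 0 \<Longrightarrow> norm t \<le> norm (a j)"
  shows "norm (\<Sum>j\<in>F. sc (a j) (e j)) \<le> norm ((\<Sum>j\<in>F. sc (a j) (e j)) + sc t (e k))"
proof -
  interpret vector_space sc by (rule vs)
  define G where "G = {j\<in>F. a j \<noteq> 0}"
  define b where "b = a(k := t)"
  define y where "y = (\<Sum>j\<in>F. sc (a j) (e j)) + sc t (e k)"
  have y_sum: "y = (\<Sum>j\<in>insert k F. sc (b j) (e j))"
    unfolding y_def b_def using F by (simp add: add.commute, intro sum.cong) auto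
  have coord_y: "coord sc e m y = (if m \<in> insert k F then b m else 0)" for m
    unfolding y_sum using F by (intro coord_finite_sum[OF vs sb]) simp
  have "greedy_set sc e y (card G) G"
    unfolding greedy_set_def
  proof (intro conjI ballI allI impI)
    fix j m assume "j \<in> G" "m \<notin> G"
    then show "norm (coord sc e m y) \<le> norm (coord sc e j y)"
      using coord_y[of j] coord_y[of m] small[of j] F by (auto simp: G_def b_def)
  qed (use F in \<open>auto simp: G_def\<close>)
  moreover have "greedy_op sc e G y = (\<Sum>j\<in>F. sc (a j) (e j))"
    unfolding greedy_op_def G_def using F coord_y
    by (intro sum.mono_neutral_cong_left) (auto simp: b_def)
  ultimately show ?thesis using cw unfolding Cw_one_def y_def by metis
qed

lemma norm_le_norm_add_if_norm_le_add_scaleR: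
  fixes x w :: "'a::real_normed_vector"
  assumes s: "0 < s" "s \<le> 1" and le: "norm x \<le> norm (x + s *\<^sub>R w)"
  shows "norm x \<le> norm (x + w)"
proof -
  have "norm (x + s *\<^sub>R w) = norm ((1 - s) *\<^sub>R x + s *\<^sub>R (x + w))"
    by (simp add: algebra_simps)
  also have "\<dots> \<le> (1 - s) * norm x + s * norm (x + w)"
    using s by (smt (verit) norm_scaleR norm_triangle_ineq)
  finally have "s * norm x \<le> s * norm (x + w)" using le by (simp add: algebra_simps)
  then show ?thesis using s by simp
qed

lemma Cw_one_norm_le_add_basis:
  fixes sc :: "'k::real_normed_field \<Rightarrow> 'a::banach \<Rightarrow> 'a"
  assumes vs: "vector_space sc" and rs: "\<forall>r x. sc (of_real r) x = scaleR r x"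
    and sb: "schauder_basis sc e" and cw: "Cw_one sc e" and F: "finite F" "k \<notin> F"
  shows "norm (\<Sum>j\<in>F. sc (a j) (e j)) \<le> norm ((\<Sum>j\<in>F. sc (a j) (e j)) + sc c (e k))"
proof -
  interpret vector_space sc by (rule vs)
  show ?thesis
  proof (cases "c = 0")
    case False
    define \<delta> where "\<delta> = Min (insert 1 ((\<lambda>j. norm (a j)) ` {j\<in>F. a j \<noteq> 0}))"
    define s where "s = min 1 (\<delta> / norm c)"
    have "\<delta> > 0" using F by (auto simp: \<delta>_def)
    then have s: "0 < s" "s \<le> 1" "s * norm c \<le> \<delta>"
      using False by (auto simp: s_def min_def field_simps)
    have "norm (of_real s * c) \<le> norm (a j)" if "j \<in> F" "a j \<noteq> 0" for j
      using s that F by (auto simp: \<delta>_def norm_mult intro: order_trans[OF _ Min_le])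
    from Cw_one_norm_le_add_small_multiple[OF vs sb cw F this]
    have "norm (\<Sum>j\<in>F. sc (a j) (e j)) \<le> norm ((\<Sum>j\<in>F. sc (a j) (e j)) + s *\<^sub>R sc c (e k))"
      using rs by (simp flip: scale_scale)
    then show ?thesis by (rule norm_le_norm_add_if_norm_le_add_scaleR[OF s(1,2)])
  qed simp
qed

lemma Cw_one_norm_sum_mono:
  fixes sc :: "'k::real_normed_field \<Rightarrow> 'a::banach \<Rightarrow> 'a"
  assumes vs: "vector_space sc" and rs: "\<forall>r x. sc (of_real r) x = scaleR r x"
    and sb: "schauder_basis sc e" and cw: "Cw_one sc e" and "finite G" "F \<subseteq> G"
  shows "norm (\<Sum>j\<in>F. sc (a j) (e j)) \<le> norm (\<Sum>j\<in>G. sc (a j) (e j))"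
proof -
  have "finite F" using assms finite_subset by blast
  have "norm (\<Sum>j\<in>F. sc (a j) (e j)) \<le> norm (\<Sum>j\<in>F \<union> D. sc (a j) (e j))" if "finite D" for D
    using that
  proof (induction D rule: finite_induct)
    case (insert k D)
    show ?case
    proof (cases "k \<in> F \<union> D")
      case False
      then have "norm (\<Sum>j\<in>F \<union> D. sc (a j) (e j))
                   \<le> norm ((\<Sum>j\<in>F \<union> D. sc (a j) (e j)) + sc (a k) (e k))"
        using \<open>finite F\<close> insert.hyps by (intro Cw_one_norm_le_add_basis[OF vs rs sb cw]) auto
      then show ?thesis using insert False \<open>finite F\<close> by (simp add: add.commute)
    qed (use insert in \<open>simp add: insert_absorb\<close>)
  qed simp
  from this[of "G - F"] show ?thesis using assms by (simp add: Un_absorb1)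
qed

lemma Cw_one_iff_Ksu_one:
  fixes sc :: "'k::real_normed_field \<Rightarrow> 'a::banach \<Rightarrow> 'a"
  assumes vs: "vector_space sc" and rs: "\<forall>r x. sc (of_real r) x = scaleR r x"
    and sb: "schauder_basis sc e"
  shows "Cw_one sc e \<longleftrightarrow> Ksu_one sc e"
proof
  assume "Ksu_one sc e"
  then show "Cw_one sc e"
    unfolding Cw_one_def Ksu_one_def greedy_set_def by (metis coord_proj_finite)
next
  assume cw: "Cw_one sc e"
  note sums = schauder_basis_sums[OF sb]
  note mono = Cw_one_norm_sum_mono[OF vs rs sb cw]
  have "unconditional_basis sc e"
    unfolding unconditional_basis_def sums_def[symmetric]
    using sums_reindex_if_norm_mono_subsums[OF mono sums] by blast
  moreover have "norm (coord_proj sc e A x) \<le> norm x" for A x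
    unfolding coord_proj_def by (rule subseries_norm_le_if_norm_mono_subsums[OF mono sums])
  ultimately show "Ksu_one sc e" unfolding Ksu_one_def by blast
qed

theorem theorem2p1:
  fixes e :: "nat \<Rightarrow> 'a::banach"
    and sc :: "complex \<Rightarrow> 'b::banach \<Rightarrow> 'b" and f :: "nat \<Rightarrow> 'b"
  shows "(infinite_dimensional (scaleR :: real \<Rightarrow> 'a \<Rightarrow> 'a) \<and> schauder_basis scaleR e \<and> semi_normalized e
            \<and> quasi_greedy scaleR e
          \<longrightarrow> (Cw_one scaleR e \<longleftrightarrow> Ksu_one scaleR e))
       \<and> (complex_banach_scale sc \<and> infinite_dimensional sc
            \<and> schauder_basis sc f \<and> semi_normalized f \<and> quasi_greedy sc f
          \<longrightarrow> (Cw_one sc f \<longleftrightarrow> Ksu_one sc f))"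
  using Cw_one_iff_Ksu_one[OF real_vector.vector_space_axioms, of e]
    Cw_one_iff_Ksu_one[of sc f]
  by (auto simp: complex_banach_scale_def)

end
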